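(* Let $L,k,N,a,r,\epsilon,p,l_j,t_j$, the state $|\phi_{final}\rangle$ and the measurement outcome $m_k$ be as in the context. Let $s_0\in\{0,1,\dots,r-1\}$ be such that $2^{l_k+1}\cdot\frac{s_0}{r}$ is an integer, i.e. $\frac{s_0}{r}=0.c_1c_2\cdots c_{l_k+1}$ in binary. Then the probability that $m_k=c_{l_k}c_{l_k+1}0\cdots0$ (a $t_k$-bit string) is at least $\frac{1}{r}$.
   Context: $L\ge1$, $k\ge1$ integers with $k\mid L$; $N$ an $L$-bit integer; $a<N$ positive with $\gcd(a,N)=1$; $r$ the order of $a$ mod $N$; $\epsilon>0$. Bit strings are identified with binary integers (most significant bit first). $|\psi_{t,\omega}\rangle=QFT^{-1}\frac{1}{\sqrt{2^t}}\sum_{j=0}^{2^t-1}e^{2\pi ij\omega}|j\rangle$ with $QFT|j\rangle=\frac{1}{\sqrt{2^t}}\sum_{x=0}^{2^t-1}e^{2\pi ijx/2^t}|x\rangle$. $|u_s\rangle=\frac{1}{\sqrt r}\sum_{q=0}^{r-1}e^{-2\pi isq/r}|a^q\bmod N\rangle$ ($L$ qubits), orthonormal for $s=0,\dots,r-1$. Parameters: $p=\lceil\log_2(2+\frac{k}{2\epsilon})\rceil$; $l_j=(j-1)\frac Lk+1$ for $j=1,\dots,k$, $l_{k+1}=2L$; $t_j=l_{j+1}+2-l_j+p$. Registers $A_j$ ($t_j$ qubits, $j=1,\dots,k$) and $C$ ($L$ qubits) are in the state $|\phi_{final}\rangle=\frac{1}{\sqrt r}\sum_{s=0}^{r-1}\big(\bigotimes_{j=1}^k|\psi_{t_j,2^{l_j-1}s/r}\rangle_{A_j}\big)|u_s\rangle_C$,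 and $m_k$ is the $t_k$-bit outcome of measuring register $A_k$ in the computational basis. *)

theory Defs
  imports Complex_Main "HOL-Number_Theory.Number_Theory" "HOL-Library.FuncSet"
begin

definition qft_inv :: "nat \<Rightarrow> (nat \<Rightarrow> complex) \<Rightarrow> nat \<Rightarrow> complex" where
  "qft_inv t v x = (1 / complex_of_real (sqrt (2 ^ t))) *
      (\<Sum>j<2 ^ t. v j * cis (- 2 * pi * real j * real x / 2 ^ t))"

definition psi_amp :: "nat \<Rightarrow> real \<Rightarrow> nat \<Rightarrow> complex" where
  "psi_amp t \<omega> x = qft_inv t (\<lambda>j. cis (2 * pi * real j * \<omega>) / complex_of_real (sqrt (2 ^ t))) x"

definition u_amp :: "nat \<Rightarrow> nat \<Rightarrow> nat \<Rightarrow> nat \<Rightarrow> nat \<Rightarrow> complex" where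
  "u_amp N a r s c = (1 / complex_of_real (sqrt (real r))) *
      (\<Sum>q<r. if c = a ^ q mod N then cis (- 2 * pi * real s * real q / real r) else 0)"

definition p_param :: "nat \<Rightarrow> real \<Rightarrow> nat" where
  "p_param k \<epsilon> = nat \<lceil>log 2 (2 + real k / (2 * \<epsilon>))\<rceil>"

definition l_param :: "nat \<Rightarrow> nat \<Rightarrow> nat \<Rightarrow> nat" where
  "l_param L k j = (if j = k + 1 then 2 * L else (j - 1) * (L div k) + 1)"

definition t_param :: "nat \<Rightarrow> nat \<Rightarrow> real \<Rightarrow> nat \<Rightarrow> nat" where
  "t_param L k \<epsilon> j = l_param L k (j + 1) + 2 - l_param L k j + p_param k \<epsilon>"

text \<open>Amplitude of |phi_final> at the computational basis state
  |xs 1>_{A_1} ... |xs k>_{A_k} |c>_C.\<close>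
definition phi_final_amp ::
  "nat \<Rightarrow> nat \<Rightarrow> real \<Rightarrow> nat \<Rightarrow> nat \<Rightarrow> nat \<Rightarrow> (nat \<Rightarrow> nat) \<Rightarrow> nat \<Rightarrow> complex" where
  "phi_final_amp L k \<epsilon> N a r xs c = (1 / complex_of_real (sqrt (real r))) *
     (\<Sum>s<r. (\<Prod>j\<in>{1..k}. psi_amp (t_param L k \<epsilon> j)
                   (2 ^ (l_param L k j - 1) * real s / real r) (xs j)) * u_amp N a r s c)"

definition prob_Ak :: "nat \<Rightarrow> nat \<Rightarrow> real \<Rightarrow> nat \<Rightarrow> nat \<Rightarrow> nat \<Rightarrow> nat \<Rightarrow> real" where
  "prob_Ak L k \<epsilon> N a r m =
     (\<Sum>xs \<in> {xs \<in> PiE {1..k} (\<lambda>j. {..<2 ^ t_param L k \<epsilon> j}). xs k = m}.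
        \<Sum>c<2 ^ L. (cmod (phi_final_amp L k \<epsilon> N a r xs c))\<^sup>2)"

text \<open>i-th binary digit after the point of s/r, i.e. s/r = 0.c_1 c_2 ...\<close>
definition bin_digit :: "nat \<Rightarrow> nat \<Rightarrow> nat \<Rightarrow> nat" where
  "bin_digit s r i = (2 ^ i * s div r) mod 2"

end

theory Submission
  imports Defs
begin

(* The states |u_s> are orthonormal (the powers a^q mod N, q < r, are distinct) and every
   |psi_{t,omega}> is a unit vector, so tracing out C and the registers A_j, j <> k, shows that
   outcome m of A_k has probability (1/r) sum_s |<m|psi_{t_k, 2^(l_k - 1) s/r}>|^2.
   For s = s0 the phase 2^(l_k - 1) s0/r = c/4 (with c = 2^(l_k + 1) s0/r) differs from
   m/2^(t_k) = (c mod 4)/4 by an integer, so the inverse QFT maps that state exactly onto |m>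
   and this single term already contributes 1/r. *)

definition dft_basis :: "nat \<Rightarrow> nat \<Rightarrow> nat \<Rightarrow> complex" where
  "dft_basis n j x = cis (- 2 * pi * real j * real x / real n) / complex_of_real (sqrt (real n))"

lemma sum_roots_unity_power:
  assumes n: "n > 0"
  shows "(\<Sum>x<n. cis (2 * pi * real_of_int d * real x / real n)) = (if int n dvd d then of_nat n else 0)"
proof -
  define z where "z = cis (2 * pi * real_of_int d / real n)"
  have powers: "cis (2 * pi * real_of_int d * real x / real n) = z ^ x" for x
    by (simp add: z_def DeMoivre mult_ac)
  have "z ^ n = cis (2 * pi * real_of_int d)" using n by (simp add: z_def DeMoivre)
  then have root: "z ^ n = 1" by simp
  have "z = 1 \<longleftrightarrow> int n dvd d"
  proof
    assume "z = 1"
    then have "cos (2 * pi * real_of_int d / real n) = 1" by (simp add: z_def complex_eq_iff)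
    then obtain m :: int where "2 * pi * real_of_int d / real n = real_of_int m * 2 * pi"
      by (subst (asm) cos_one_2pi_int) blast
    then have "real_of_int d = real_of_int (m * int n)" using n by (simp add: field_simps)
    then show "int n dvd d" by (metis dvd_triv_right of_int_eq_iff)
  next
    assume "int n dvd d"
    then obtain m where "d = int n * m" by blast
    then have "2 * pi * real_of_int d / real n = 2 * pi * real_of_int m" using n by simp
    then show "z = 1" by (simp add: z_def)
  qed
  then show ?thesis unfolding powers sum_gp_strict using root by auto
qed

lemma dft_basis_orthonormal:
  assumes "j < n" "j' < n"
  shows "(\<Sum>x<n. dft_basis n j x * cnj (dft_basis n j' x)) = (if j = j' then 1 else 0)"
proof -
  have n: "n > 0" using assms by simp
  have product: "dft_basis n j x * cnj (dft_basis n j' x)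
      = cis (2 * pi * real_of_int (int j' - int j) * real x / real n) / of_nat n" for x
  proof -
    have sqrt_sq: "complex_of_real (sqrt (real n)) * complex_of_real (sqrt (real n)) = of_nat n"
      by (simp flip: of_real_mult)
    have angle: "- 2 * pi * real j * real x / real n + 2 * pi * real j' * real x / real n
        = 2 * pi * real_of_int (int j' - int j) * real x / real n"
      using n by (simp add: field_simps)
    have "dft_basis n j x * cnj (dft_basis n j' x)
        = (cis (- 2 * pi * real j * real x / real n) * cis (2 * pi * real j' * real x / real n))
          / (complex_of_real (sqrt (real n)) * complex_of_real (sqrt (real n)))"
      by (simp add: dft_basis_def cis_cnj)
    then show ?thesis unfolding sqrt_sq cis_mult angle .
  qed
  moreover have "int n dvd (int j' - int j) \<longleftrightarrow> j = j'"
  proof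
    assume "int n dvd (int j' - int j)"
    moreover have "\<bar>int j' - int j\<bar> < int n" using assms by linarith
    ultimately show "j = j'" using dvd_imp_le_int[of "int j' - int j" "int n"] by fastforce
  qed simp
  ultimately show ?thesis
    unfolding product sum_divide_distrib[symmetric] sum_roots_unity_power[OF n] using n by simp
qed

lemma sum_norm_square_orthonormal:
  fixes f :: "'s \<Rightarrow> 'c \<Rightarrow> complex" and \<alpha> :: "'s \<Rightarrow> complex"
  assumes "finite S" "finite C"
    and orth: "\<And>s s'. s \<in> S \<Longrightarrow> s' \<in> S \<Longrightarrow>
                 (\<Sum>c\<in>C. f s c * cnj (f s' c)) = (if s = s' then 1 else 0)"
  shows "(\<Sum>c\<in>C. (cmod (\<Sum>s\<in>S. \<alpha> s * f s c))\<^sup>2) = (\<Sum>s\<in>S. (cmod (\<alpha> s))\<^sup>2)"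
proof -
  have "complex_of_real (\<Sum>c\<in>C. (cmod (\<Sum>s\<in>S. \<alpha> s * f s c))\<^sup>2)
      = (\<Sum>c\<in>C. (\<Sum>s\<in>S. \<alpha> s * f s c) * cnj (\<Sum>s\<in>S. \<alpha> s * f s c))"
    by (simp only: of_real_sum complex_norm_square)
  also have "\<dots> = (\<Sum>c\<in>C. \<Sum>s\<in>S. \<Sum>s'\<in>S. \<alpha> s * cnj (\<alpha> s') * (f s c * cnj (f s' c)))"
    by (simp add: sum_product mult_ac)
  also have "\<dots> = (\<Sum>s\<in>S. \<Sum>s'\<in>S. \<alpha> s * cnj (\<alpha> s') * (\<Sum>c\<in>C. f s c * cnj (f s' c)))"
    by (subst sum.swap) (simp add: sum_distrib_left sum.swap[of _ C])
  also have "\<dots> = (\<Sum>s\<in>S. \<Sum>s'\<in>S. if s' = s then \<alpha> s * cnj (\<alpha> s) else 0)"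
    by (intro sum.cong refl) (auto simp: orth)
  also have "\<dots> = (\<Sum>s\<in>S. \<alpha> s * cnj (\<alpha> s))"
    using assms(1) by (simp add: sum.delta)
  also have "\<dots> = complex_of_real (\<Sum>s\<in>S. (cmod (\<alpha> s))\<^sup>2)"
    by (simp only: of_real_sum complex_norm_square)
  finally show ?thesis using of_real_eq_iff by blast
qed

lemma qft_inv_eq_sum_dft_basis: "qft_inv t v x = (\<Sum>j<2 ^ t. v j * dft_basis (2 ^ t) j x)"
  unfolding qft_inv_def dft_basis_def by (simp add: sum_distrib_left mult_ac)

lemma sum_norm_qft_inv: "(\<Sum>x<2 ^ t. (cmod (qft_inv t v x))\<^sup>2) = (\<Sum>j<2 ^ t. (cmod (v j))\<^sup>2)"
  unfolding qft_inv_eq_sum_dft_basis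
  by (rule sum_norm_square_orthonormal) (auto simp: dft_basis_orthonormal)

lemma sum_norm_psi_amp: "(\<Sum>x<2 ^ t. (cmod (psi_amp t \<omega> x))\<^sup>2) = 1"
  unfolding psi_amp_def sum_norm_qft_inv by (simp add: norm_divide power_divide)

lemma norm_psi_amp_eq_1:
  assumes "\<omega> - real m / 2 ^ t \<in> \<int>"
  shows "cmod (psi_amp t \<omega> m) = 1"
proof -
  have phases: "cis (2 * pi * real j * \<omega>) * cis (- 2 * pi * real j * real m / 2 ^ t) = 1" for j
  proof -
    have "cis (2 * pi * real j * \<omega>) * cis (- 2 * pi * real j * real m / 2 ^ t)
        = cis (2 * pi * (real j * (\<omega> - real m / 2 ^ t)))"
      by (simp add: cis_mult algebra_simps)
    also have "\<dots> = 1" using assms by simp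
    finally show ?thesis .
  qed
  have sqrt_sq: "complex_of_real (sqrt (2 ^ t)) * complex_of_real (sqrt (2 ^ t)) = 2 ^ t"
    by (simp flip: of_real_mult)
  have "psi_amp t \<omega> m = (\<Sum>j<(2::nat) ^ t. cis (2 * pi * real j * \<omega>) * cis (- 2 * pi * real j * real m / 2 ^ t))
           / (complex_of_real (sqrt (2 ^ t)) * complex_of_real (sqrt (2 ^ t)))"
    unfolding psi_amp_def qft_inv_def by (simp add: sum_divide_distrib mult_ac)
  then show ?thesis unfolding phases sqrt_sq by simp
qed

lemma sum_mult_cnj_pushforward:
  fixes A B :: "'q \<Rightarrow> complex"
  assumes "finite Q" "finite C" "inj_on g Q" "g ` Q \<subseteq> C"
  shows "(\<Sum>c\<in>C. (\<Sum>q\<in>Q. if c = g q then A q else 0) * cnj (\<Sum>q\<in>Q. if c = g q then B q else 0))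
       = (\<Sum>q\<in>Q. A q * cnj (B q))"
proof -
  have diagonal: "(\<Sum>c\<in>C. (if c = g q then A q else 0) * cnj (if c = g q' then B q' else 0))
       = (if q' = q then A q * cnj (B q) else 0)" if "q \<in> Q" "q' \<in> Q" for q q'
  proof -
    have "(\<Sum>c\<in>C. (if c = g q then A q else 0) * cnj (if c = g q' then B q' else 0))
       = (\<Sum>c\<in>C. if c = g q then (if g q = g q' then A q * cnj (B q') else 0) else 0)"
      by (intro sum.cong refl) auto
    also have "\<dots> = (if g q = g q' then A q * cnj (B q') else 0)"
      using assms that by (simp add: subset_iff)
    also have "\<dots> = (if q' = q then A q * cnj (B q) else 0)"
      using assms(3) that by (auto simp: inj_on_def)
    finally show ?thesis .
  qed
  have "(\<Sum>c\<in>C. (\<Sum>q\<in>Q. if c = g q then A q else 0) * cnj (\<Sum>q\<in>Q. if c = g q then B q else 0))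
     = (\<Sum>q\<in>Q. \<Sum>q'\<in>Q. \<Sum>c\<in>C. (if c = g q then A q else 0) * cnj (if c = g q' then B q' else 0))"
    by (simp add: sum_product cnj_sum sum.swap[of _ C])
  also have "\<dots> = (\<Sum>q\<in>Q. A q * cnj (B q))"
    using assms(1) by (simp add: diagonal cong: sum.cong)
  finally show ?thesis .
qed

lemma u_amp_eq_sum_dft_basis:
  "u_amp N a r s c = (\<Sum>q<r. if c = a ^ q mod N then dft_basis r s q else 0)"
  unfolding u_amp_def dft_basis_def sum_distrib_left by (intro sum.cong refl) auto

lemma u_amp_orthonormal:
  assumes "coprime a N" "r = ord N a" "0 < N" "N \<le> 2 ^ L" "s < r" "s' < r"
  shows "(\<Sum>c<2 ^ L. u_amp N a r s c * cnj (u_amp N a r s' c)) = (if s = s' then 1 else 0)"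
proof -
  have "(\<Sum>c<2 ^ L. u_amp N a r s c * cnj (u_amp N a r s' c))
      = (\<Sum>q<r. dft_basis r s q * cnj (dft_basis r s' q))"
    unfolding u_amp_eq_sum_dft_basis
  proof (rule sum_mult_cnj_pushforward)
    show "inj_on (\<lambda>q. a ^ q mod N) {..<r}"
      using assms(1,2) by (simp add: inj_power_mod coprime_commute)
    show "(\<lambda>q. a ^ q mod N) ` {..<r} \<subseteq> {..<2 ^ L}"
      using assms(3,4) by (auto intro: less_le_trans[OF mod_less_divisor])
  qed auto
  then show ?thesis using assms(5,6) by (simp add: dft_basis_orthonormal)
qed

lemma sum_norm_phi_final_amp:
  assumes "coprime a N" "r = ord N a" "0 < N" "N \<le> 2 ^ L"
  shows "(\<Sum>c<2 ^ L. (cmod (phi_final_amp L k \<epsilon> N a r xs c))\<^sup>2)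
       = (\<Sum>s<r. \<Prod>j\<in>{1..k}. (cmod (psi_amp (t_param L k \<epsilon> j)
                                   (2 ^ (l_param L k j - 1) * real s / real r) (xs j)))\<^sup>2) / real r"
proof -
  define P where "P s = (\<Prod>j\<in>{1..k}. psi_amp (t_param L k \<epsilon> j)
                           (2 ^ (l_param L k j - 1) * real s / real r) (xs j))" for s
  have expansion: "phi_final_amp L k \<epsilon> N a r xs c
      = (\<Sum>s<r. (P s / complex_of_real (sqrt (real r))) * u_amp N a r s c)" for c
    unfolding phi_final_amp_def P_def sum_distrib_left by (simp add: mult_ac)
  have "(\<Sum>c<2 ^ L. (cmod (phi_final_amp L k \<epsilon> N a r xs c))\<^sup>2)
      = (\<Sum>s<r. (cmod (P s / complex_of_real (sqrt (real r))))\<^sup>2)"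
    unfolding expansion
    by (rule sum_norm_square_orthonormal) (auto simp: u_amp_orthonormal[OF assms])
  also have "\<dots> = (\<Sum>s<r. (cmod (P s))\<^sup>2) / real r"
    by (simp add: norm_divide power_divide sum_divide_distrib)
  finally show ?thesis
    by (simp add: P_def prod_norm[symmetric] prod_power_distrib)
qed

lemma sum_prod_PiE_fixed_coordinate:
  fixes f :: "'i \<Rightarrow> 'b \<Rightarrow> 'c :: comm_semiring_1"
  assumes "finite I" "k \<in> I" "m \<in> B k"
    and normalized: "\<And>j. j \<in> I \<Longrightarrow> j \<noteq> k \<Longrightarrow> (\<Sum>y\<in>B j. f j y) = 1"
  shows "(\<Sum>xs\<in>{xs \<in> PiE I B. xs k = m}. \<Prod>j\<in>I. f j (xs j)) = f k m"
proof -
  let ?B = "B(k := {m})"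
  have fiber: "{xs \<in> PiE I B. xs k = m} = PiE I ?B"
    using assms(2,3) by (auto simp: PiE_iff extensional_def split: if_splits)
  \<comment> \<open>an infinite \<open>B j\<close> would have sum 0\<close>
  have finite: "finite (?B j)" if "j \<in> I" for j
    using normalized[of j] that by (cases "j = k") (auto intro: sum.infinite ccontr)
  have "(\<Sum>xs\<in>{xs \<in> PiE I B. xs k = m}. \<Prod>j\<in>I. f j (xs j))
      = (\<Prod>j\<in>I. \<Sum>y\<in>?B j. f j y)"
    unfolding fiber by (rule prod_sum_PiE[symmetric]) (use assms(1) finite in auto)
  also have "\<dots> = (\<Prod>j\<in>I. if j = k then f k m else 1)"
    using normalized by (intro prod.cong) auto
  finally show ?thesis using assms(1,2) by simp
qed

lemma prob_Ak_eq_average: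
  assumes "coprime a N" "r = ord N a" "0 < N" "N \<le> 2 ^ L" "k \<ge> 1" "m < 2 ^ t_param L k \<epsilon> k"
  shows "prob_Ak L k \<epsilon> N a r m
       = (\<Sum>s<r. (cmod (psi_amp (t_param L k \<epsilon> k)
                          (2 ^ (l_param L k k - 1) * real s / real r) m))\<^sup>2) / real r"
proof -
  define \<psi> where "\<psi> s j y = (cmod (psi_amp (t_param L k \<epsilon> j)
                              (2 ^ (l_param L k j - 1) * real s / real r) y))\<^sup>2" for s j y
  define X where "X = {xs \<in> PiE {1..k} (\<lambda>j. {..<2 ^ t_param L k \<epsilon> j}). xs k = m}"
  have "prob_Ak L k \<epsilon> N a r m = (\<Sum>xs\<in>X. (\<Sum>s<r. \<Prod>j\<in>{1..k}. \<psi> s j (xs j)) / real r)"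
    unfolding prob_Ak_def X_def \<psi>_def sum_norm_phi_final_amp[OF assms(1-4)] ..
  also have "\<dots> = (\<Sum>s<r. \<Sum>xs\<in>X. \<Prod>j\<in>{1..k}. \<psi> s j (xs j)) / real r"
    by (simp add: sum_divide_distrib sum.swap[of _ X])
  also have "\<dots> = (\<Sum>s<r. \<psi> s k m) / real r"
    unfolding X_def
    by (intro arg_cong2[where f = "(/)"] sum.cong refl sum_prod_PiE_fixed_coordinate)
       (use assms(5,6) in \<open>auto simp: \<psi>_def sum_norm_psi_amp\<close>)
  finally show ?thesis by (simp add: \<psi>_def)
qed

lemma bin_digit_pair:
  assumes "2 ^ (i + 1) * s = r * c" "r > 0"
  shows "2 * bin_digit s r i + bin_digit s r (i + 1) = c mod 4"
proof -
  have low: "bin_digit s r (i + 1) = c mod 2"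
    using assms by (simp add: bin_digit_def)
  have "2 ^ i * s div r = (2 * (2 ^ i * s)) div (2 * r)" by simp
  also have "2 * (2 ^ i * s) = c * r" using assms(1) by (simp add: mult_ac)
  also have "c * r div (2 * r) = c div 2" using assms(2) by (simp add: div_mult_mult2)
  finally have "bin_digit s r i = c div 2 mod 2" by (simp add: bin_digit_def)
  with low show ?thesis using mod_mult2_eq[of c 2 2] by simp
qed

lemma t_param_last_ge_2:
  assumes "L \<ge> 1"
  shows "2 \<le> t_param L k \<epsilon> k"
proof -
  have "(k - 1) * (L div k) \<le> k * (L div k)" by simp
  also have "\<dots> \<le> L" by simp
  finally show ?thesis using assms by (simp add: t_param_def l_param_def)
qed

lemma phase_minus_outcome_in_Ints:
  assumes "2 ^ (l + 1) * s = r * c" "r > 0" "l \<ge> 1" "T \<ge> 2"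
  shows "2 ^ (l - 1) * real s / real r - real ((c mod 4) * 2 ^ (T - 2)) / 2 ^ T \<in> \<int>"
proof -
  have "(4::real) * 2 ^ (l - 1) = 2 ^ (l + 1)"
    using assms(3) by (cases l) auto
  then have "4 * (2 ^ (l - 1) * real s) = real (2 ^ (l + 1) * s)"
    by (simp add: mult.assoc[symmetric])
  also have "\<dots> = real r * real c"
    unfolding assms(1) by simp
  finally have phase: "2 ^ (l - 1) * real s / real r = real c / 4"
    using assms(2) by (simp add: field_simps)
  have "(2::real) ^ T = 2 ^ 2 * 2 ^ (T - 2)"
    using assms(4) by (metis le_add_diff_inverse power_add)
  then have outcome: "real ((c mod 4) * 2 ^ (T - 2)) / 2 ^ T = real (c mod 4) / 4"
    by simp
  have "real c = 4 * real (c div 4) + real (c mod 4)"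
    by (metis of_nat_add of_nat_mult of_nat_numeral div_mult_mod_eq mult.commute)
  then have "real c / 4 - real (c mod 4) / 4 = real (c div 4)"
    by linarith
  then show ?thesis unfolding phase outcome by simp
qed

theorem lemma2:
  fixes L k N a r s0 :: nat and \<epsilon> :: real
  assumes "L \<ge> 1" and "k \<ge> 1" and "k dvd L"
    and "2 ^ (L - 1) \<le> N" and "N < 2 ^ L"
    and "0 < a" and "a < N" and "coprime a N"
    and "r = ord N a"
    and "\<epsilon> > 0"
    and "s0 < r"
    and "r dvd 2 ^ (l_param L k k + 1) * s0"
  shows "prob_Ak L k \<epsilon> N a r
           ((2 * bin_digit s0 r (l_param L k k) + bin_digit s0 r (l_param L k k + 1))
              * 2 ^ (t_param L k \<epsilon> k - 2))
         \<ge> 1 / real r"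
proof -
  define l where "l = l_param L k k"
  define T where "T = t_param L k \<epsilon> k"
  define \<omega> where "\<omega> s = 2 ^ (l - 1) * real s / real r" for s
  have r: "r > 0" using assms(11) by simp
  obtain c where c: "2 ^ (l + 1) * s0 = r * c" using assms(12) by (auto simp: l_def)
  define m where "m = (c mod 4) * 2 ^ (T - 2)"
  have "l \<ge> 1" by (simp add: l_def l_param_def)
  have "T \<ge> 2" using t_param_last_ge_2[OF assms(1)] by (simp add: T_def)
  then have "(2::nat) ^ T = 2 ^ 2 * 2 ^ (T - 2)"
    by (metis le_add_diff_inverse power_add)
  then have "m < 2 ^ T" by (simp add: m_def)
  have "prob_Ak L k \<epsilon> N a r m = (\<Sum>s<r. (cmod (psi_amp T (\<omega> s) m))\<^sup>2) / real r"
    unfolding T_def \<omega>_def l_def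
    by (rule prob_Ak_eq_average) (use assms \<open>m < 2 ^ T\<close> in \<open>auto simp: T_def\<close>)
  also have "\<dots> \<ge> (cmod (psi_amp T (\<omega> s0) m))\<^sup>2 / real r"
    using assms(11) by (intro divide_right_mono member_le_sum) auto
  also have "cmod (psi_amp T (\<omega> s0) m) = 1"
    using phase_minus_outcome_in_Ints[OF c r \<open>l \<ge> 1\<close> \<open>T \<ge> 2\<close>]
    by (intro norm_psi_amp_eq_1) (simp add: \<omega>_def m_def)
  finally show ?thesis
    using bin_digit_pair[OF c r] by (simp add: m_def l_def T_def)
qed

end
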